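(* Let $q$ be an odd prime power, $z\in\mathbb F_q^\times$, and $A\in\widehat{\mathbb F_q^\times}$ of order larger than $2$. Then $${}_2\mathbb F_1\!\left[\begin{matrix}A&A\phi\\&\phi\end{matrix};z\right]=\frac{1+\phi(z)}2\left(\overline A^2(1+\sqrt z)+\overline A^2(1-\sqrt z)\right),$$ $${}_2\mathbb F_1\!\left[\begin{matrix}A&A\phi\\&A^2\end{matrix};z\right]=\frac{1+\phi(1-z)}2\left(\overline A^2\!\left(\frac{1+\sqrt{1-z}}2\right)+\overline A^2\!\left(\frac{1-\sqrt{1-z}}2\right)\right).$$
   Context: $\mathbb F_q$ is a finite field with $q$ elements, $q$ a power of an odd prime $p$. $\widehat{\mathbb F_q^\times}$ is the group of multiplicative characters $\chi:\mathbb F_q^\times\to\mathbb C^\times$; every character, including the trivial character $\varepsilon$, is extended to $\mathbb F_q$ by $\chi(0)=0$. $\phi$ is the quadratic character, $\overline\chi$ denotes the complex-conjugate (inverse) character, and products/powers of characters are pointwise. Jacobi sum: $J(A,B)=\sum_{x\in\mathbb F_q}A(x)B(1-x)$. Period function: ${}_2\mathbb P_1\!\left[\begin{matrix}A&B\\&C\end{matrix};\lambda\right]=\sum_{y\in\mathbb F_q}B(y)\,\overline BC(1-y)\,\overline A(1-\lambda y)$; normalized function ${}_2\mathbb F_1\!\left[\begin{matrix}A&B\\&C\end{matrix};\lambda\right]=\frac{1}{J(B,C\overline B)}\,{}_2\mathbb P_1\!\left[\begin{matrix}A&B\\&C\end{matrix};\lambda\right]$. For $w\in\mathbb F_q$,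 $\sqrt w$ denotes either square root of $w$ in $\mathbb F_q$ when one exists (the expressions do not depend on the choice); when $w$ is a nonzero non-square the prefactor $(1+\phi(w))/2$ is $0$ and the whole right-hand side is interpreted as $0$. *)

theory Defs
  imports "HOL-Analysis.Analysis"
begin

definition mult_char :: "('a::{field,finite} \<Rightarrow> complex) \<Rightarrow> bool" where
  "mult_char c \<longleftrightarrow> c 0 = 0 \<and> (\<forall>x. x \<noteq> 0 \<longrightarrow> c x \<noteq> 0) \<and>
     (\<forall>x y. x \<noteq> 0 \<longrightarrow> y \<noteq> 0 \<longrightarrow> c (x * y) = c x * c y)"

definition char_order :: "('a::{field,finite} \<Rightarrow> complex) \<Rightarrow> nat" where
  "char_order c = (LEAST n. 0 < n \<and> (\<forall>x. x \<noteq> 0 \<longrightarrow> c x ^ n = 1))"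

definition qchar :: "'a::{field,finite} \<Rightarrow> complex" where
  "qchar x = (if x = 0 then 0 else if (\<exists>y. y ^ 2 = x) then 1 else -1)"

definition cconj :: "('a \<Rightarrow> complex) \<Rightarrow> 'a \<Rightarrow> complex" where
  "cconj c x = cnj (c x)"

definition cmul :: "('a \<Rightarrow> complex) \<Rightarrow> ('a \<Rightarrow> complex) \<Rightarrow> 'a \<Rightarrow> complex" where
  "cmul c d x = c x * d x"

definition jacobi :: "('a::{field,finite} \<Rightarrow> complex) \<Rightarrow> ('a \<Rightarrow> complex) \<Rightarrow> complex" where
  "jacobi A B = (\<Sum>x\<in>UNIV. A x * B (1 - x))"

definition P21 :: "('a::{field,finite} \<Rightarrow> complex) \<Rightarrow> ('a \<Rightarrow> complex) \<Rightarrow> ('a \<Rightarrow> complex) \<Rightarrow> 'a \<Rightarrow> complex" where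
  "P21 A B C lam = (\<Sum>y\<in>UNIV. B y * cmul (cconj B) C (1 - y) * cconj A (1 - lam * y))"

definition F21 :: "('a::{field,finite} \<Rightarrow> complex) \<Rightarrow> ('a \<Rightarrow> complex) \<Rightarrow> ('a \<Rightarrow> complex) \<Rightarrow> 'a \<Rightarrow> complex" where
  "F21 A B C lam = P21 A B C lam / jacobi B (cmul C (cconj B))"

end

theory Submission
  imports Defs
begin

text \<open>
  Both periods are evaluated by grouping the summation variable \<open>y\<close> according to the value \<open>u\<close>
  of the rational function inside \<open>A\<close>: \<open>y / ((1 - y) (1 - z y))\<close> for \<open>C = \<phi>\<close> and
  \<open>y (1 - y) / (1 - z y)\<close> for \<open>C = A\<^sup>2\<close>. Each fibre is the zero set of a quadratic in \<open>y\<close>.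
  If \<open>z = s\<^sup>2\<close> (resp. \<open>1 - z = s\<^sup>2\<close>), its discriminant factors as \<open>a b\<close> with \<open>a, b\<close> linear in \<open>u\<close>,
  and the fibre contributes \<open>\<phi>(u a) + \<phi>(u b)\<close>: roots exist only when \<open>\<phi>(a) = \<phi>(b)\<close>, and then
  each has quadratic character \<open>\<phi>(u a)\<close>. Summing \<open>A(u) \<phi>(u a)\<close> over \<open>u\<close> gives the Jacobi sum
  \<open>J(A\<phi>, conj A)\<close> (resp. \<open>J(A\<phi>, A\<phi>)\<close>) times \<open>(conj A)\<^sup>2(1 \<plusminus> s)\<close> (resp. \<open>(conj A)\<^sup>2((1 \<plusminus> s) / 2)\<close>),
  and this Jacobi sum is precisely the normalising factor of \<open>2F1\<close>; it is nonzero because \<open>A\<close>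
  has order larger than 2. If \<open>z\<close> (resp. \<open>1 - z\<close>) is a nonsquare, the two roots in every fibre
  have opposite quadratic characters and the period vanishes.
\<close>

lemma of_nat_CARD_eq_0: "(of_nat CARD('a::{field,finite}) :: 'a) = 0"
proof -
  have "(\<Sum>x\<in>(UNIV::'a set). x + 1) = (\<Sum>x\<in>UNIV. x)"
    by (rule sum.reindex_bij_witness[of _ "\<lambda>x. x - 1" "\<lambda>x. x + 1"]) auto
  then show ?thesis by (simp add: sum.distrib)
qed

lemma two_neq_zero_if_odd_card:
  assumes "odd CARD('a::{field,finite})"
  shows "(2::'a) \<noteq> 0"
proof
  assume two: "(2::'a) = 0"
  obtain k where "CARD('a) = 2 * k + 1" using assms oddE by blast
  then have "(of_nat CARD('a) :: 'a) = 1" by (simp add: two)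
  then show False by (simp add: of_nat_CARD_eq_0)
qed

lemma card_nonzero: "card {x::'a::{field,finite}. x \<noteq> 0} = CARD('a) - 1"
proof -
  have "{x::'a. x \<noteq> 0} = UNIV - {0}" by auto
  then show ?thesis by (simp add: card_Diff_subset)
qed

lemma two_le_CARD: "2 \<le> CARD('a::{field,finite})"
proof -
  have "card {0::'a, 1} \<le> CARD('a)" by (rule card_mono) simp_all
  then show ?thesis by simp
qed

lemma minus_neq_self:
  fixes t :: "'a::field"
  assumes "(2::'a) \<noteq> 0" "t \<noteq> 0"
  shows "- t \<noteq> t"
proof
  assume "- t = t"
  then have "2 * t = 0" by (simp add: algebra_simps)
  with assms show False by simp
qed

lemma four_neq_zero:
  assumes "(2::'a::field) \<noteq> 0"
  shows "(4::'a) \<noteq> 0"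
proof -
  have "(4::'a) = 2 * 2" by simp
  with assms show ?thesis by (simp only: mult_eq_0_iff) simp
qed

lemma square_roots_of_square: "{r. r\<^sup>2 = t\<^sup>2} = {t, - (t::'a::field)}"
  by (auto simp: power2_eq_iff)

lemma power_card_minus_one:
  fixes x :: "'a::{field,finite}"
  assumes "x \<noteq> 0"
  shows "x ^ (CARD('a) - 1) = 1"
proof -
  let ?S = "{y::'a. y \<noteq> 0}"
  have "(\<Prod>y\<in>?S. x * y) = (\<Prod>y\<in>?S. y)"
    by (rule prod.reindex_bij_witness[of _ "\<lambda>y. y / x" "\<lambda>y. x * y"]) (use assms in auto)
  then have "x ^ card ?S * (\<Prod>y\<in>?S. y) = (\<Prod>y\<in>?S. y)"
    by (simp add: prod.distrib)
  then show ?thesis by (simp add: card_nonzero)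
qed

lemma sum_comp_by_fibers:
  fixes g :: "'a::finite \<Rightarrow> 'b::finite" and F :: "'b \<Rightarrow> 'c::comm_semiring_1"
  shows "(\<Sum>y\<in>UNIV. w y * F (g y)) = (\<Sum>u\<in>UNIV. F u * (\<Sum>y | g y = u. w y))"
proof -
  have "(\<Sum>u\<in>UNIV. F u * (\<Sum>y | g y = u. w y)) = (\<Sum>u\<in>UNIV. \<Sum>y | y \<in> UNIV \<and> g y = u. w y * F (g y))"
    by (auto simp: sum_distrib_left mult.commute intro!: sum.cong)
  also have "\<dots> = (\<Sum>y\<in>UNIV. w y * F (g y))"
    by (rule sum.group) auto
  finally show ?thesis by simp
qed

lemma sum_affine_square_roots:
  fixes k m D :: "'a::field"
  assumes "k \<noteq> 0"
  shows "(\<Sum>y | (k * y - m)\<^sup>2 = D. f y) = (\<Sum>r | r\<^sup>2 = D. f ((m + r) / k))"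
proof -
  have "{y. (k * y - m)\<^sup>2 = D} = (\<lambda>r. (m + r) / k) ` {r. r\<^sup>2 = D}"
  proof (intro set_eqI iffI)
    fix y assume "y \<in> {y. (k * y - m)\<^sup>2 = D}"
    moreover have "y = (m + (k * y - m)) / k" using assms by (simp add: field_simps)
    ultimately show "y \<in> (\<lambda>r. (m + r) / k) ` {r. r\<^sup>2 = D}" by blast
  qed (use assms in auto)
  moreover have "inj (\<lambda>r. (m + r) / k)" using assms by (auto simp: inj_def field_simps)
  ultimately show ?thesis by (simp add: sum.reindex inj_on_subset)
qed

context
  fixes c :: "'a::{field,finite} \<Rightarrow> complex"
  assumes c: "mult_char c"
begin

lemma mult_char_zero [simp]: "c 0 = 0"
  using c by (simp add: mult_char_def)

lemma mult_char_nonzero: "x \<noteq> 0 \<Longrightarrow> c x \<noteq> 0"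
  using c by (simp add: mult_char_def)

lemma mult_char_mult: "c (x * y) = c x * c y"
  using c by (cases "x = 0 \<or> y = 0") (auto simp: mult_char_def)

lemma mult_char_one [simp]: "c 1 = 1"
  using mult_char_mult[of 1 1] mult_char_nonzero[of 1] by simp

lemma mult_char_power: "c (x ^ n) = c x ^ n"
  by (induct n) (simp_all add: mult_char_mult)

lemma norm_mult_char: "x \<noteq> 0 \<Longrightarrow> norm (c x) = 1"
proof -
  assume "x \<noteq> 0"
  have "c x ^ (CARD('a) - 1) = c (x ^ (CARD('a) - 1))" by (simp only: mult_char_power)
  also have "\<dots> = 1" using power_card_minus_one[OF \<open>x \<noteq> 0\<close>] by simp
  finally have "c x ^ (CARD('a) - 1) = 1" .
  moreover have "CARD('a) - 1 \<noteq> 0" using two_le_CARD[where 'a='a] by simp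
  ultimately show "norm (c x) = 1" using power_eq_1_iff[of "c x" "CARD('a) - 1"] by auto
qed

lemma mult_char_mult_cnj: "x \<noteq> 0 \<Longrightarrow> c x * cnj (c x) = 1"
  using norm_mult_char complex_norm_square[of "c x"] by simp

lemma cnj_mult_char: "cnj (c x) = c (inverse x)"
proof (cases "x = 0")
  case False
  have "c x * c (inverse x) = 1"
    using False by (simp flip: mult_char_mult)
  then show ?thesis using mult_char_mult_cnj[OF False] by (metis mult_left_cancel zero_neq_one mult_zero_left)
qed simp

lemma sum_mult_char_cong:
  "(\<And>u. u \<noteq> 0 \<Longrightarrow> S u = T u) \<Longrightarrow> (\<Sum>u\<in>UNIV. c u * S u) = (\<Sum>u\<in>UNIV. c u * T u)"
  by (intro sum.cong refl) (metis mult_char_zero mult_zero_left)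

lemma sum_mult_char_eq_0:
  assumes "g \<noteq> 0" "c g \<noteq> 1"
  shows "(\<Sum>x\<in>UNIV. c x) = 0"
proof -
  have "(\<Sum>x\<in>UNIV. c (g * x)) = (\<Sum>x\<in>UNIV. c x)"
    by (rule sum.reindex_bij_witness[of _ "\<lambda>y. y / g" "\<lambda>y. g * y"]) (use assms in auto)
  then have "(c g - 1) * (\<Sum>x\<in>UNIV. c x) = 0"
    by (simp add: mult_char_mult sum_distrib_left algebra_simps)
  then show ?thesis using assms by simp
qed

end

lemma mult_char_cmul: "mult_char c \<Longrightarrow> mult_char d \<Longrightarrow> mult_char (cmul c d)"
  by (simp add: mult_char_def cmul_def)

lemma mult_char_cconj: "mult_char c \<Longrightarrow> mult_char (cconj c)"
  by (simp add: mult_char_def cconj_def)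

lemma card_moebius_fiber:
  fixes a v :: "'a::{field,finite}"
  assumes "a \<noteq> 1" "v \<noteq> 0"
  shows "card {y. (1 - a * y) / (1 - y) = v} = (if v = a then 0 else 1)"
proof -
  have iff: "(1 - a * y) / (1 - y) = v \<longleftrightarrow> y * (v - a) = v - 1" for y
  proof (cases "y = 1")
    case True then show ?thesis using assms by (simp add: algebra_simps)
  next
    case False
    then have "(1 - a * y) / (1 - y) = v \<longleftrightarrow> 1 - a * y = v * (1 - y)"
      by (simp add: divide_eq_eq)
    also have "\<dots> \<longleftrightarrow> y * (v - a) = v - 1" by (auto simp: algebra_simps)
    finally show ?thesis .
  qed
  show ?thesis
  proof (cases "v = a")
    case True then show ?thesis using iff assms by simp
  next
    case False
    then have "y * (v - a) = v - 1 \<longleftrightarrow> y = (v - 1) / (v - a)" for y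
      by (simp add: eq_divide_eq)
    then have "{y. (1 - a * y) / (1 - y) = v} = {(v - 1) / (v - a)}"
      using iff by blast
    then show ?thesis using False by simp
  qed
qed

lemma sum_mult_char_moebius:
  fixes d :: "'a::{field,finite} \<Rightarrow> complex"
  assumes d: "mult_char d" and sum_d: "(\<Sum>x\<in>UNIV. d x) = 0"
  shows "(\<Sum>y\<in>UNIV. d ((1 - a * y) / (1 - y))) = (if a = 1 then of_nat CARD('a) - 1 else - d a)"
proof (cases "a = 1")
  case True
  have "(\<Sum>y\<in>UNIV. d ((1 - y) / (1 - y))) = (\<Sum>y::'a\<in>UNIV. if y = 1 then 0 else 1)"
    by (intro sum.cong refl) (simp add: mult_char_zero[OF d] mult_char_one[OF d])
  also have "\<dots> = of_nat CARD('a) - 1"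
    using card_nonzero[where 'a='a]
    by (simp add: sum.If_cases Compl_eq_Diff_UNIV card_Diff_singleton of_nat_diff)
  finally show ?thesis using True by simp
next
  case False
  have "(\<Sum>y\<in>UNIV. d ((1 - a * y) / (1 - y))) = (\<Sum>v\<in>UNIV. d v * card {y. (1 - a * y) / (1 - y) = v})"
    using sum_comp_by_fibers[of "\<lambda>_. 1" d "\<lambda>y. (1 - a * y) / (1 - y)"] by simp
  also have "\<dots> = (\<Sum>v\<in>UNIV. d v - (if v = a then d v else 0))"
  proof (rule sum.cong[OF refl])
    fix v :: 'a
    show "d v * card {y. (1 - a * y) / (1 - y) = v} = d v - (if v = a then d v else 0)"
      by (cases "v = 0") (simp_all add: mult_char_zero[OF d] card_moebius_fiber[OF False])
  qed
  also have "\<dots> = - d a" by (simp add: sum_subtractf sum_d)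
  finally show ?thesis using False by simp
qed

lemma jacobi_norm_square:
  fixes c d :: "'a::{field,finite} \<Rightarrow> complex"
  assumes c: "mult_char c" and d: "mult_char d"
    and c_nontriv: "g \<noteq> 0" "c g \<noteq> 1" and d_nontriv: "h \<noteq> 0" "d h \<noteq> 1"
    and cd_nontriv: "k \<noteq> 0" "c k * d k \<noteq> 1"
  shows "jacobi c d * cnj (jacobi c d) = of_nat CARD('a)"
proof -
  have sum_c: "(\<Sum>x\<in>UNIV. c x) = 0" by (rule sum_mult_char_eq_0[OF c c_nontriv])
  have sum_d: "(\<Sum>x\<in>UNIV. d x) = 0" by (rule sum_mult_char_eq_0[OF d d_nontriv])
  have sum_cd: "(\<Sum>x\<in>UNIV. c x * d x) = 0"
    using sum_mult_char_eq_0[OF mult_char_cmul[OF c d] cd_nontriv(1)] cd_nontriv(2)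
    by (simp add: cmul_def)
  have "jacobi c d * cnj (jacobi c d)
      = (\<Sum>x\<in>UNIV. \<Sum>y\<in>UNIV. c x * d (1 - x) * cnj (c y * d (1 - y)))"
    by (simp add: jacobi_def sum_product)
  also have "\<dots> = (\<Sum>y\<in>UNIV. \<Sum>x\<in>UNIV. c (x / y) * d ((1 - x) / (1 - y)))"
    by (subst sum.swap) (simp add: cnj_mult_char[OF c] cnj_mult_char[OF d]
        mult_char_mult[OF c] mult_char_mult[OF d] divide_inverse mult_ac)
  also have "\<dots> = (\<Sum>y\<in>UNIV. \<Sum>a\<in>UNIV. c a * d ((1 - a * y) / (1 - y)))"
  proof (rule sum.cong[OF refl])
    fix y :: 'a
    show "(\<Sum>x\<in>UNIV. c (x / y) * d ((1 - x) / (1 - y))) = (\<Sum>a\<in>UNIV. c a * d ((1 - a * y) / (1 - y)))"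
    proof (cases "y = 0")
      case True
      then show ?thesis using sum_c by (simp add: mult_char_zero[OF c] flip: sum_distrib_right)
    next
      case False
      show ?thesis
        by (rule sum.reindex_bij_witness[of _ "\<lambda>x. x * y" "\<lambda>a. a / y"]) (use False in auto)
    qed
  qed
  also have "\<dots> = (\<Sum>a\<in>UNIV. c a * (\<Sum>y\<in>UNIV. d ((1 - a * y) / (1 - y))))"
    by (subst sum.swap) (simp add: sum_distrib_left)
  also have "\<dots> = (\<Sum>a\<in>UNIV. c a * (if a = 1 then of_nat CARD('a) - 1 else - d a))"
    by (simp add: sum_mult_char_moebius[OF d sum_d])
  also have "\<dots> = of_nat CARD('a) - 1 + (\<Sum>a\<in>UNIV - {1}. c a * (- d a))"
    by (subst sum.remove[of _ 1]) (auto simp: mult_char_one[OF c] intro!: sum.cong)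
  also have "\<dots> = of_nat CARD('a) - (\<Sum>a\<in>UNIV. c a * d a)"
    by (simp add: sum_diff1 sum_negf mult_char_one[OF c] mult_char_one[OF d])
  finally show ?thesis using sum_cd by simp
qed

lemma qchar_0 [simp]: "qchar 0 = 0"
  by (simp add: qchar_def)

lemma cnj_qchar [simp]: "cnj (qchar x) = qchar x"
  by (simp add: qchar_def)

lemma qchar_nonzero_cases: "x \<noteq> 0 \<Longrightarrow> qchar x = 1 \<or> qchar x = -1"
  by (simp add: qchar_def)

lemma qchar_power2: "x \<noteq> 0 \<Longrightarrow> (qchar x)\<^sup>2 = 1"
  by (simp add: qchar_def)

lemma qchar_square: "t \<noteq> 0 \<Longrightarrow> qchar (t\<^sup>2) = 1"
  by (auto simp: qchar_def)

lemma qchar_mult_square: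
  fixes x t :: "'a::{field,finite}"
  assumes "t \<noteq> 0"
  shows "qchar (x * t\<^sup>2) = qchar x"
proof -
  have "(\<exists>y. y\<^sup>2 = x * t\<^sup>2) \<longleftrightarrow> (\<exists>y. y\<^sup>2 = x)"
  proof
    assume "\<exists>y. y\<^sup>2 = x * t\<^sup>2"
    then obtain y where "y\<^sup>2 = x * t\<^sup>2" by blast
    then have "(y / t)\<^sup>2 = x" using assms by (simp add: power_divide)
    then show "\<exists>y. y\<^sup>2 = x" by blast
  next
    assume "\<exists>y. y\<^sup>2 = x"
    then obtain y where "y\<^sup>2 = x" by blast
    then have "(y * t)\<^sup>2 = x * t\<^sup>2" by (simp add: power_mult_distrib)
    then show "\<exists>y. y\<^sup>2 = x * t\<^sup>2" by blast
  qed
  then show ?thesis using assms by (simp add: qchar_def)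
qed

lemma card_nonzero_square_roots:
  assumes "(2::'a::{field,finite}) \<noteq> 0" "t \<noteq> 0"
  shows "card {r::'a. r \<noteq> 0 \<and> r\<^sup>2 = t\<^sup>2} = 2"
proof -
  have "{r::'a. r \<noteq> 0 \<and> r\<^sup>2 = t\<^sup>2} = {t, -t}"
    using assms(2) by (auto simp: power2_eq_iff)
  then show ?thesis using minus_neq_self[OF assms] by simp
qed

lemma card_nonzero_squares:
  assumes two: "(2::'a::{field,finite}) \<noteq> 0"
  shows "2 * card {w::'a. w \<noteq> 0 \<and> (\<exists>t. t\<^sup>2 = w)} = CARD('a) - 1"
proof -
  let ?S = "{w::'a. w \<noteq> 0 \<and> (\<exists>t. t\<^sup>2 = w)}"
  have "(\<Sum>w\<in>?S. \<Sum>r | r \<in> {r::'a. r \<noteq> 0} \<and> r\<^sup>2 = w. 1::nat) = (\<Sum>r | r \<noteq> (0::'a). 1)"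
    by (rule sum.group) auto
  moreover have "(\<Sum>w\<in>?S. \<Sum>r | r \<in> {r::'a. r \<noteq> 0} \<and> r\<^sup>2 = w. 1::nat) = (\<Sum>w\<in>?S. 2)"
  proof (rule sum.cong[OF refl])
    fix w assume "w \<in> ?S"
    then obtain t where "t \<noteq> 0" "w = t\<^sup>2" by auto
    then show "(\<Sum>r | r \<in> {r::'a. r \<noteq> 0} \<and> r\<^sup>2 = w. 1::nat) = 2"
      using card_nonzero_square_roots[OF two] by simp
  qed
  ultimately show ?thesis by (simp add: card_nonzero)
qed

lemma product_of_nonsquares_is_square:
  fixes x y :: "'a::{field,finite}"
  assumes two: "(2::'a) \<noteq> 0"
    and x: "x \<noteq> 0" "\<nexists>t. t\<^sup>2 = x" and y: "y \<noteq> 0" "\<nexists>t. t\<^sup>2 = y"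
  shows "\<exists>t. t\<^sup>2 = x * y"
proof -
  define S where "S = {w::'a. w \<noteq> 0 \<and> (\<exists>t. t\<^sup>2 = w)}"
  define N where "N = {w::'a. w \<noteq> 0 \<and> \<not> (\<exists>t. t\<^sup>2 = w)}"
  have "S \<union> N = {w. w \<noteq> 0}" "S \<inter> N = {}" by (auto simp: S_def N_def)
  then have "card S + card N = CARD('a) - 1"
    using card_Un_disjoint[of S N] card_nonzero[where 'a='a] by simp
  then have card_N: "card N = card S"
    using card_nonzero_squares[OF two] by (simp add: S_def)
  have "(\<lambda>w. x * w) ` S \<subseteq> N"
  proof
    fix v assume "v \<in> (\<lambda>w. x * w) ` S"
    then obtain t where t: "t \<noteq> 0" "v = x * t\<^sup>2" by (auto simp: S_def)
    have "\<nexists>c. c\<^sup>2 = v"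
    proof
      assume "\<exists>c. c\<^sup>2 = v"
      then obtain c where "c\<^sup>2 = x * t\<^sup>2" using t by blast
      then have "(c / t)\<^sup>2 = x" using t by (simp add: power_divide)
      then show False using x by blast
    qed
    then show "v \<in> N" using t x by (simp add: N_def)
  qed
  moreover have "card ((\<lambda>w. x * w) ` S) = card S"
    by (rule card_image) (use x in \<open>auto simp: inj_on_def\<close>)
  ultimately have "(\<lambda>w. x * w) ` S = N" using card_N by (simp add: card_subset_eq)
  moreover have "y \<in> N" using y by (simp add: N_def)
  ultimately obtain w where "w \<in> S" "y = x * w" by blast
  then obtain t where "y = x * t\<^sup>2" by (auto simp: S_def)
  then have "(x * t)\<^sup>2 = x * y" by (simp add: power2_eq_square)
  then show ?thesis by blast
qed

lemma qchar_mult: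
  fixes x y :: "'a::{field,finite}"
  assumes two: "(2::'a) \<noteq> 0"
  shows "qchar (x * y) = qchar x * qchar y"
proof (cases "x = 0 \<or> y = 0")
  case False
  consider (x_square) t where "t\<^sup>2 = x" | (y_square) t where "t\<^sup>2 = y"
    | (nonsquares) "\<nexists>t. t\<^sup>2 = x" "\<nexists>t. t\<^sup>2 = y" by blast
  then show ?thesis
  proof cases
    case x_square
    then show ?thesis using False qchar_mult_square[of t y] qchar_square[of t] by (auto simp: mult.commute)
  next
    case y_square
    then show ?thesis using False qchar_mult_square[of t x] qchar_square[of t] by auto
  next
    case nonsquares
    then have "\<exists>t. t\<^sup>2 = x * y" using False by (intro product_of_nonsquares_is_square[OF two]) auto
    then show ?thesis using nonsquares False by (simp add: qchar_def)
  qed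
qed auto

lemma mult_char_qchar: "(2::'a::{field,finite}) \<noteq> 0 \<Longrightarrow> mult_char (qchar :: 'a \<Rightarrow> complex)"
  by (simp add: mult_char_def qchar_mult) (simp add: qchar_def)

lemma qchar_inverse: "(2::'a::{field,finite}) \<noteq> 0 \<Longrightarrow> qchar (inverse x) = qchar (x::'a)"
  using cnj_mult_char[OF mult_char_qchar, of x] by simp

lemma exists_nonsquare:
  assumes two: "(2::'a::{field,finite}) \<noteq> 0"
  shows "\<exists>n::'a. n \<noteq> 0 \<and> (\<nexists>t. t\<^sup>2 = n)"
proof (rule ccontr)
  assume "\<not> ?thesis"
  then have "{w::'a. w \<noteq> 0 \<and> (\<exists>t. t\<^sup>2 = w)} = {w. w \<noteq> 0}" by auto
  then have "2 * (CARD('a) - 1) = CARD('a) - 1"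
    using card_nonzero_squares[OF two] card_nonzero[where 'a='a] by simp
  then show False using two_le_CARD[where 'a='a] by simp
qed

lemma card_square_roots:
  assumes two: "(2::'a::{field,finite}) \<noteq> 0"
  shows "(of_nat (card {r. r\<^sup>2 = d}) :: complex) = 1 + qchar (d::'a)"
proof (cases "\<exists>t. t\<^sup>2 = d")
  case True
  then obtain t where t: "t\<^sup>2 = d" by blast
  show ?thesis
  proof (cases "t = 0")
    case False
    then show ?thesis using t square_roots_of_square[of t] minus_neq_self[OF two False]
      qchar_square[OF False] by simp
  qed (use t in simp)
next
  case False
  moreover have "d \<noteq> 0" using False by (metis power_zero_numeral)
  ultimately show ?thesis by (simp add: qchar_def)
qed

lemma qchar_eq_if_mult_eq_square:
  fixes x y t :: "'a::{field,finite}"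
  assumes "x * y = t\<^sup>2" "x \<noteq> 0" "y \<noteq> 0"
  shows "qchar x = qchar y"
proof -
  have "t \<noteq> 0" using assms by auto
  have "x = y * (t / y)\<^sup>2" using assms(1)[symmetric] assms(3) by (simp add: power2_eq_square field_simps)
  then show ?thesis using qchar_mult_square[of "t / y" y] \<open>t \<noteq> 0\<close> assms(3) by simp
qed

lemma sum_qchar_square_roots:
  fixes a b u :: "'a::{field,finite}" and f :: "'a \<Rightarrow> 'a"
  assumes two: "(2::'a) \<noteq> 0" and "u \<noteq> 0" and ab: "a \<noteq> 0 \<or> b \<noteq> 0"
    and fa: "\<And>r. r\<^sup>2 = a * b \<Longrightarrow> a \<noteq> 0 \<Longrightarrow> qchar (f r) = qchar (u * a)"
    and fb: "\<And>r. r\<^sup>2 = a * b \<Longrightarrow> b \<noteq> 0 \<Longrightarrow> qchar (f r) = qchar (u * b)"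
  shows "(\<Sum>r | r\<^sup>2 = a * b. qchar (f r)) = qchar (u * a) + qchar (u * b)"
proof (cases "a * b = 0")
  case True
  then have "{r. r\<^sup>2 = a * b} = {0}" by auto
  moreover have "a = 0 \<and> b \<noteq> 0 \<or> a \<noteq> 0 \<and> b = 0" using True ab by auto
  ultimately show ?thesis using fa[of 0] fb[of 0] True by auto
next
  case False
  then have "a \<noteq> 0" "b \<noteq> 0" by auto
  show ?thesis
  proof (cases "\<exists>t. t\<^sup>2 = a * b")
    case True
    then obtain t where t: "t\<^sup>2 = a * b" by blast
    then have "t \<noteq> 0" using False by auto
    have "qchar a * qchar b = 1"
      using qchar_square[OF \<open>t \<noteq> 0\<close>] t by (simp add: qchar_mult[OF two])
    then have "qchar a = qchar b"
      using qchar_nonzero_cases[OF \<open>a \<noteq> 0\<close>] qchar_nonzero_cases[OF \<open>b \<noteq> 0\<close>] by auto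
    moreover have "{r. r\<^sup>2 = a * b} = {t, -t}" using square_roots_of_square[of t] t by simp
    ultimately show ?thesis
      using fb[of t] fb[of "-t"] t \<open>b \<noteq> 0\<close> minus_neq_self[OF two \<open>t \<noteq> 0\<close>]
      by (simp add: qchar_mult[OF two])
  next
    case False
    have "qchar (a * b) = -1" using False \<open>a * b \<noteq> 0\<close> by (simp add: qchar_def)
    then have "qchar a + qchar b = 0"
      using qchar_nonzero_cases[OF \<open>a \<noteq> 0\<close>] qchar_nonzero_cases[OF \<open>b \<noteq> 0\<close>]
      by (auto simp: qchar_mult[OF two])
    moreover have "{r. r\<^sup>2 = a * b} = {}" using False by auto
    ultimately show ?thesis by (simp add: qchar_mult[OF two] flip: distrib_left)
  qed
qed

lemma sum_qchar_square_roots_eq_0: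
  fixes f :: "'a::{field,finite} \<Rightarrow> 'a"
  assumes "\<And>r. r\<^sup>2 = D \<Longrightarrow> qchar (f r) * qchar (f (- r)) = -1"
  shows "(\<Sum>r | r\<^sup>2 = D. qchar (f r)) = 0"
proof -
  have "(\<Sum>r | r\<^sup>2 = D. qchar (f r)) = (\<Sum>r | r\<^sup>2 = D. qchar (f (- r)))"
    by (rule sum.reindex_bij_witness[of _ uminus uminus]) auto
  moreover have "qchar (f r) + qchar (f (- r)) = 0" if "r\<^sup>2 = D" for r
    using assms[OF that] unfolding qchar_def by (auto split: if_splits)
  then have "(\<Sum>r | r\<^sup>2 = D. qchar (f r)) + (\<Sum>r | r\<^sup>2 = D. qchar (f (- r))) = 0"
    by (simp flip: sum.distrib)
  ultimately show ?thesis by simp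
qed

lemma fiber_phi_eq:
  fixes u z :: "'a::field"
  assumes two: "(2::'a) \<noteq> 0" and u: "u \<noteq> 0" and z: "z \<noteq> 0"
  shows "{y. y / ((1 - y) * (1 - z * y)) = u}
    = {y. (2 * u * z * y - (u * (1 + z) + 1))\<^sup>2 = (u * (1 + z) + 1)\<^sup>2 - 4 * u\<^sup>2 * z}"
proof -
  have "y / ((1 - y) * (1 - z * y)) = u \<longleftrightarrow> y = u * ((1 - y) * (1 - z * y))" for y
  proof (cases "(1 - y) * (1 - z * y) = 0")
    case True
    then have "y \<noteq> 0" by auto
    then show ?thesis using True u by auto
  next
    case False
    then show ?thesis by (auto simp: field_simps)
  qed
  moreover have "y = u * ((1 - y) * (1 - z * y)) \<longleftrightarrow>
       (2 * u * z * y - (u * (1 + z) + 1))\<^sup>2 = (u * (1 + z) + 1)\<^sup>2 - 4 * u\<^sup>2 * z" for y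
  proof -
    have id: "(2 * u * z * y - (u * (1 + z) + 1))\<^sup>2 - ((u * (1 + z) + 1)\<^sup>2 - 4 * u\<^sup>2 * z)
        = (4 * u * z) * (u * ((1 - y) * (1 - z * y)) - y)"
      by (simp add: power2_eq_square algebra_simps)
    have "4 * u * z \<noteq> 0" using four_neq_zero[OF two] u z by simp
    then show ?thesis using id by (metis eq_iff_diff_eq_0 mult_eq_0_iff)
  qed
  ultimately show ?thesis by blast
qed

lemma qchar_on_fiber_phi:
  fixes u s y :: "'a::{field,finite}"
  assumes two: "(2::'a) \<noteq> 0" and u: "u \<noteq> 0" and s: "s \<noteq> 0"
    and y: "y / ((1 - y) * (1 - s\<^sup>2 * y)) = u" and a: "1 + (1 - s)\<^sup>2 * u \<noteq> 0"
  shows "qchar y = qchar (u * (1 + (1 - s)\<^sup>2 * u))"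
proof -
  define m where "m = u * (1 + s\<^sup>2) + 1"
  define a where "a = 1 + (1 - s)\<^sup>2 * u"
  define b where "b = 1 + (1 + s)\<^sup>2 * u"
  define r where "r = 2 * u * s\<^sup>2 * y - m"
  have "s\<^sup>2 \<noteq> 0" using s by simp
  have "y \<in> {y. y / ((1 - y) * (1 - s\<^sup>2 * y)) = u}" using y by simp
  then have "r\<^sup>2 = m\<^sup>2 - 4 * u\<^sup>2 * s\<^sup>2"
    unfolding fiber_phi_eq[OF two u \<open>s\<^sup>2 \<noteq> 0\<close>] by (simp add: r_def m_def)
  also have "\<dots> = a * b" by (simp add: m_def a_def b_def power2_eq_square algebra_simps)
  finally have r: "r\<^sup>2 = a * b" .
  txt \<open>Since \<open>2 m = a + b\<close>, the quadratic satisfied by \<open>y\<close> makes \<open>4 s\<^sup>2 u a y\<close> the square \<open>(r + a)\<^sup>2\<close>.\<close>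
  have "y * (u * a) * (4 * s\<^sup>2) = a * (a + b) + 2 * a * r"
    by (simp add: r_def m_def a_def b_def power2_eq_square algebra_simps)
  also have "\<dots> = (r + a)\<^sup>2" using r by (simp add: power2_eq_square algebra_simps)
  finally have "y * (u * a) * (4 * s\<^sup>2) = (r + a)\<^sup>2" .
  moreover have "4 * s\<^sup>2 \<noteq> 0" using four_neq_zero[OF two] s by simp
  ultimately have "y * (u * a) = ((r + a) / (2 * s))\<^sup>2"
    by (simp add: power_divide power_mult_distrib eq_divide_eq)
  moreover have "y \<noteq> 0" using y u by auto
  moreover have "u * a \<noteq> 0" using u a by (simp add: a_def)
  ultimately show ?thesis by (simp add: a_def qchar_eq_if_mult_eq_square)
qed

lemma sum_qchar_fiber_phi_square:
  fixes u s :: "'a::{field,finite}"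
  assumes two: "(2::'a) \<noteq> 0" and u: "u \<noteq> 0" and s: "s \<noteq> 0"
  shows "(\<Sum>y | y / ((1 - y) * (1 - s\<^sup>2 * y)) = u. qchar y)
    = qchar (u * (1 + (1 - s)\<^sup>2 * u)) + qchar (u * (1 + (1 + s)\<^sup>2 * u))"
proof -
  define m where "m = u * (1 + s\<^sup>2) + 1"
  define k where "k = 2 * u * s\<^sup>2"
  define a where "a = 1 + (1 - s)\<^sup>2 * u"
  define b where "b = 1 + (1 + s)\<^sup>2 * u"
  have k: "k \<noteq> 0" using two u s by (simp add: k_def)
  have "m\<^sup>2 - 4 * u\<^sup>2 * s\<^sup>2 = a * b" by (simp add: m_def a_def b_def power2_eq_square algebra_simps)
  then have fiber: "{y. y / ((1 - y) * (1 - s\<^sup>2 * y)) = u} = {y. (k * y - m)\<^sup>2 = a * b}"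
    using fiber_phi_eq[OF two u, of "s\<^sup>2"] s by (simp add: k_def m_def)
  have "(\<Sum>y | y / ((1 - y) * (1 - s\<^sup>2 * y)) = u. qchar y) = (\<Sum>r | r\<^sup>2 = a * b. qchar ((m + r) / k))"
    unfolding fiber by (rule sum_affine_square_roots[OF k])
  also have "\<dots> = qchar (u * a) + qchar (u * b)"
  proof (rule sum_qchar_square_roots[OF two u])
    have "a - b = - (4 * s * u)" by (simp add: a_def b_def power2_eq_square algebra_simps)
    then show "a \<noteq> 0 \<or> b \<noteq> 0" using four_neq_zero[OF two] s u by auto
  next
    fix r assume "r\<^sup>2 = a * b"
    then have "(m + r) / k \<in> {y. y / ((1 - y) * (1 - s\<^sup>2 * y)) = u}"
      unfolding fiber using k by simp
    then have on_fiber: "(m + r) / k / ((1 - (m + r) / k) * (1 - s\<^sup>2 * ((m + r) / k))) = u" by simp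
    show "qchar ((m + r) / k) = qchar (u * a)" if "a \<noteq> 0"
      using qchar_on_fiber_phi[OF two u s on_fiber] that by (simp add: a_def)
    txt \<open>The case of \<open>b\<close> is the case of \<open>a\<close> for \<open>-s\<close>.\<close>
    show "qchar ((m + r) / k) = qchar (u * b)" if "b \<noteq> 0"
      using qchar_on_fiber_phi[OF two u _ , of "- s" "(m + r) / k"] on_fiber s that by (simp add: b_def)
  qed
  finally show ?thesis by (simp add: a_def b_def)
qed

lemma sum_qchar_fiber_phi_nonsquare:
  fixes u z :: "'a::{field,finite}"
  assumes two: "(2::'a) \<noteq> 0" and u: "u \<noteq> 0" and z: "z \<noteq> 0" and nonsquare: "\<nexists>t. t\<^sup>2 = z"
  shows "(\<Sum>y | y / ((1 - y) * (1 - z * y)) = u. qchar y) = 0"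
proof -
  define m where "m = u * (1 + z) + 1"
  define k where "k = 2 * u * z"
  have k: "k \<noteq> 0" using two u z by (simp add: k_def)
  have "(\<Sum>y | y / ((1 - y) * (1 - z * y)) = u. qchar y) = (\<Sum>r | r\<^sup>2 = m\<^sup>2 - 4 * u\<^sup>2 * z. qchar ((m + r) / k))"
    unfolding fiber_phi_eq[OF two u z] using sum_affine_square_roots[OF k] by (simp add: k_def m_def)
  also have "\<dots> = 0"
  proof (rule sum_qchar_square_roots_eq_0)
    fix r assume r: "r\<^sup>2 = m\<^sup>2 - 4 * u\<^sup>2 * z"
    have "(m + r) / k * ((m + - r) / k) = (m\<^sup>2 - r\<^sup>2) / k\<^sup>2"
      by (simp add: power2_eq_square field_simps)
    also have "\<dots> = 4 * u\<^sup>2 * z / k\<^sup>2" using r by simp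
    also have "\<dots> = inverse z"
      using u z two four_neq_zero[OF two] by (simp add: k_def power2_eq_square field_simps)
    finally have "qchar ((m + r) / k) * qchar ((m + - r) / k) = qchar z"
      by (simp add: qchar_inverse[OF two] flip: qchar_mult[OF two])
    then show "qchar ((m + r) / k) * qchar ((m + - r) / k) = -1"
      using z nonsquare by (simp add: qchar_def)
  qed
  finally show ?thesis .
qed

text \<open>Clearing the denominator adds only points with \<open>1 - z y = 0\<close>, where \<open>y (1 - y) = 0\<close>.\<close>

lemma sum_qchar_fiber_A_square_eq:
  fixes u z :: "'a::{field,finite}"
  assumes "u \<noteq> 0"
  shows "(\<Sum>y | y * (1 - y) / (1 - z * y) = u. qchar (y * (1 - y)))
    = (\<Sum>y | y * (1 - y) = u * (1 - z * y). qchar (y * (1 - y)))"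
proof (rule sum.mono_neutral_left)
  show "{y. y * (1 - y) / (1 - z * y) = u} \<subseteq> {y. y * (1 - y) = u * (1 - z * y)}"
    using assms by (auto simp: divide_eq_eq)
  show "\<forall>y \<in> {y. y * (1 - y) = u * (1 - z * y)} - {y. y * (1 - y) / (1 - z * y) = u}.
      qchar (y * (1 - y)) = 0"
    by (auto simp: divide_eq_eq)
qed simp

lemma fiber_A_square_eq:
  fixes u z :: "'a::field"
  assumes two: "(2::'a) \<noteq> 0"
  shows "{y. y * (1 - y) = u * (1 - z * y)} = {y. (2 * y - (1 + u * z))\<^sup>2 = (1 + u * z)\<^sup>2 - 4 * u}"
proof -
  have "(2 * y - (1 + u * z))\<^sup>2 - ((1 + u * z)\<^sup>2 - 4 * u) = 4 * (u * (1 - z * y) - y * (1 - y))" for y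
    by (simp add: power2_eq_square algebra_simps)
  then have "y * (1 - y) = u * (1 - z * y) \<longleftrightarrow> (2 * y - (1 + u * z))\<^sup>2 = (1 + u * z)\<^sup>2 - 4 * u" for y
    using four_neq_zero[OF two] by (metis eq_iff_diff_eq_0 mult_eq_0_iff)
  then show ?thesis by blast
qed

lemma qchar_on_fiber_A_square:
  fixes u s y :: "'a::{field,finite}"
  assumes two: "(2::'a) \<noteq> 0" and u: "u \<noteq> 0" and s: "s \<noteq> 0"
    and y: "y * (1 - y) = u * (1 - (1 - s\<^sup>2) * y)" and a: "1 - (1 + s)\<^sup>2 * u \<noteq> 0"
  shows "qchar (y * (1 - y)) = qchar (u * (1 - (1 + s)\<^sup>2 * u))"
proof -
  define z where "z = 1 - s\<^sup>2"
  define m where "m = 1 + u * z"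
  define a where "a = 1 - (1 + s)\<^sup>2 * u"
  define b where "b = 1 - (1 - s)\<^sup>2 * u"
  define r where "r = 2 * y - m"
  have "y \<in> {y. y * (1 - y) = u * (1 - z * y)}" using y by (simp add: z_def)
  then have "r\<^sup>2 = m\<^sup>2 - 4 * u" unfolding fiber_A_square_eq[OF two] by (simp add: r_def m_def)
  also have "\<dots> = a * b" by (simp add: m_def a_def b_def z_def power2_eq_square algebra_simps)
  finally have r: "r\<^sup>2 = a * b" .
  have "1 - z * y \<noteq> 0"
  proof
    assume "1 - z * y = 0"
    then have "y = 1" using y by (auto simp: z_def)
    with \<open>1 - z * y = 0\<close> show False using s by (simp add: z_def)
  qed
  txt \<open>On the fibre \<open>y (1 - y) = u (1 - z y)\<close>, so it suffices that \<open>4 (1 - z y) a\<close> is a square.\<close>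
  have "4 * (1 - z * y) * a = ((1 + s) * r - (1 - s) * a)\<^sup>2 + (1 + s)\<^sup>2 * (a * b - r\<^sup>2)"
    by (simp add: r_def a_def b_def m_def z_def power2_eq_square algebra_simps)
  then have "4 * (1 - z * y) * a = ((1 + s) * r - (1 - s) * a)\<^sup>2" using r by simp
  moreover have "y * (1 - y) * (u * a) * 4 = u\<^sup>2 * (4 * (1 - z * y) * a)"
    unfolding y[folded z_def] by (simp add: power2_eq_square algebra_simps)
  ultimately have "y * (1 - y) * (u * a) * 4 = (u * ((1 + s) * r - (1 - s) * a))\<^sup>2"
    by (simp add: power_mult_distrib)
  then have "y * (1 - y) * (u * a) = (u * ((1 + s) * r - (1 - s) * a) / 2)\<^sup>2"
    using four_neq_zero[OF two] by (simp add: power_divide eq_divide_eq)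
  moreover have "y * (1 - y) \<noteq> 0" using y u \<open>1 - z * y \<noteq> 0\<close> by (simp add: z_def)
  moreover have "u * a \<noteq> 0" using u a by (simp add: a_def)
  ultimately show ?thesis by (simp add: a_def qchar_eq_if_mult_eq_square)
qed

lemma sum_qchar_fiber_A_square_square:
  fixes u s :: "'a::{field,finite}"
  assumes two: "(2::'a) \<noteq> 0" and u: "u \<noteq> 0" and s: "s \<noteq> 0"
  shows "(\<Sum>y | y * (1 - y) / (1 - (1 - s\<^sup>2) * y) = u. qchar (y * (1 - y)))
    = qchar (u * (1 - (1 + s)\<^sup>2 * u)) + qchar (u * (1 - (1 - s)\<^sup>2 * u))"
proof -
  define m where "m = 1 + u * (1 - s\<^sup>2)"
  define a where "a = 1 - (1 + s)\<^sup>2 * u"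
  define b where "b = 1 - (1 - s)\<^sup>2 * u"
  have "m\<^sup>2 - 4 * u = a * b" by (simp add: m_def a_def b_def power2_eq_square algebra_simps)
  then have fiber: "{y. y * (1 - y) = u * (1 - (1 - s\<^sup>2) * y)} = {y. (2 * y - m)\<^sup>2 = a * b}"
    unfolding fiber_A_square_eq[OF two] m_def by simp
  have "(\<Sum>y | y * (1 - y) / (1 - (1 - s\<^sup>2) * y) = u. qchar (y * (1 - y)))
      = (\<Sum>y | y * (1 - y) = u * (1 - (1 - s\<^sup>2) * y). qchar (y * (1 - y)))"
    by (rule sum_qchar_fiber_A_square_eq[OF u])
  also have "\<dots> = (\<Sum>r | r\<^sup>2 = a * b. qchar ((m + r) / 2 * (1 - (m + r) / 2)))"
    unfolding fiber by (rule sum_affine_square_roots[OF two])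
  also have "\<dots> = qchar (u * a) + qchar (u * b)"
  proof (rule sum_qchar_square_roots[OF two u])
    have "a - b = - (4 * s * u)" by (simp add: a_def b_def power2_eq_square algebra_simps)
    then show "a \<noteq> 0 \<or> b \<noteq> 0" using four_neq_zero[OF two] s u by auto
  next
    fix r assume "r\<^sup>2 = a * b"
    moreover have "2 * ((m + r) / 2) - m = r" using two by (simp add: field_simps)
    ultimately have "(m + r) / 2 \<in> {y. y * (1 - y) = u * (1 - (1 - s\<^sup>2) * y)}"
      unfolding fiber by simp
    then have on_fiber: "(m + r) / 2 * (1 - (m + r) / 2) = u * (1 - (1 - s\<^sup>2) * ((m + r) / 2))" by simp
    show "qchar ((m + r) / 2 * (1 - (m + r) / 2)) = qchar (u * a)" if "a \<noteq> 0"
      using qchar_on_fiber_A_square[OF two u s on_fiber] that by (simp add: a_def)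
    txt \<open>The case of \<open>b\<close> is the case of \<open>a\<close> for \<open>-s\<close>.\<close>
    show "qchar ((m + r) / 2 * (1 - (m + r) / 2)) = qchar (u * b)" if "b \<noteq> 0"
      using qchar_on_fiber_A_square[OF two u _, of "- s" "(m + r) / 2"] on_fiber s that by (simp add: b_def)
  qed
  finally show ?thesis by (simp add: a_def b_def)
qed

lemma sum_qchar_fiber_A_square_nonsquare:
  fixes u z :: "'a::{field,finite}"
  assumes two: "(2::'a) \<noteq> 0" and u: "u \<noteq> 0" and nonsquare: "\<nexists>t. t\<^sup>2 = 1 - z"
  shows "(\<Sum>y | y * (1 - y) / (1 - z * y) = u. qchar (y * (1 - y))) = 0"
proof -
  define m where "m = 1 + u * z"
  have "(\<Sum>y | y * (1 - y) / (1 - z * y) = u. qchar (y * (1 - y)))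
      = (\<Sum>y | y * (1 - y) = u * (1 - z * y). qchar (y * (1 - y)))"
    by (rule sum_qchar_fiber_A_square_eq[OF u])
  also have "\<dots> = (\<Sum>r | r\<^sup>2 = m\<^sup>2 - 4 * u. qchar ((m + r) / 2 * (1 - (m + r) / 2)))"
    unfolding fiber_A_square_eq[OF two] m_def by (rule sum_affine_square_roots[OF two])
  also have "\<dots> = 0"
  proof (rule sum_qchar_square_roots_eq_0)
    fix r assume r: "r\<^sup>2 = m\<^sup>2 - 4 * u"
    define Y\<^sub>1 where "Y\<^sub>1 = (m + r) / 2"
    define Y\<^sub>2 where "Y\<^sub>2 = (m + - r) / 2"
    have "Y\<^sub>1 * Y\<^sub>2 = (m\<^sup>2 - r\<^sup>2) / 4"
      using two by (simp add: Y\<^sub>1_def Y\<^sub>2_def power2_eq_square field_simps)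
    then have prod: "Y\<^sub>1 * Y\<^sub>2 = u" using r four_neq_zero[OF two] by simp
    have sum: "Y\<^sub>1 + Y\<^sub>2 = m" using two by (simp add: Y\<^sub>1_def Y\<^sub>2_def field_simps)
    have "Y\<^sub>1 * (1 - Y\<^sub>1) * (Y\<^sub>2 * (1 - Y\<^sub>2)) = Y\<^sub>1 * Y\<^sub>2 * (1 - (Y\<^sub>1 + Y\<^sub>2) + Y\<^sub>1 * Y\<^sub>2)"
      by (simp add: algebra_simps)
    also have "\<dots> = (1 - z) * u\<^sup>2"
      unfolding prod sum m_def by (simp add: power2_eq_square algebra_simps)
    finally have "qchar (Y\<^sub>1 * (1 - Y\<^sub>1)) * qchar (Y\<^sub>2 * (1 - Y\<^sub>2)) = qchar (1 - z)"
      using u by (simp add: qchar_mult_square flip: qchar_mult[OF two])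
    moreover have "1 - z \<noteq> 0" using nonsquare by (metis power_zero_numeral)
    ultimately show "qchar (Y\<^sub>1 * (1 - Y\<^sub>1)) * qchar (Y\<^sub>2 * (1 - Y\<^sub>2)) = -1"
      using nonsquare by (simp add: qchar_def)
  qed
  finally show ?thesis .
qed

lemma sum_qchar_fiber_A_square_one:
  fixes u :: "'a::{field,finite}"
  assumes "u \<noteq> 0"
  shows "(\<Sum>y | y * (1 - y) / (1 - y) = u. qchar (y * (1 - y))) = qchar (u * (1 - u))"
proof -
  have "y * (1 - y) = u * (1 - y) \<longleftrightarrow> (y - u) * (1 - y) = 0" for y
    by (simp add: algebra_simps)
  then have "{y. y * (1 - y) = u * (1 - y)} = {1, u}" by auto
  then have "(\<Sum>y | y * (1 - y) = u * (1 - y). qchar (y * (1 - y))) = qchar (u * (1 - u))"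
    by (cases "u = 1") simp_all
  then show ?thesis using sum_qchar_fiber_A_square_eq[OF assms, of 1] by (simp only: mult_1)
qed

lemma fiber_jacobi_eq:
  fixes c u :: "'a::field"
  assumes two: "(2::'a) \<noteq> 0" and c: "c \<noteq> 0"
  shows "{x. 4 * x * (1 - x) / c = u} = {x. (2 * x - 1)\<^sup>2 = 1 - c * u}"
proof -
  have "4 * x * (1 - x) / c = u \<longleftrightarrow> 4 * x * (1 - x) = c * u" for x
    using c by (auto simp: divide_eq_eq mult.commute)
  moreover have "4 * x * (1 - x) = c * u \<longleftrightarrow> (2 * x - 1)\<^sup>2 = 1 - c * u" for x
    by (auto simp: power2_eq_square algebra_simps)
  ultimately show ?thesis by blast
qed

lemma sum_qchar_moebius_twist:
  fixes A :: "'a::{field,finite} \<Rightarrow> complex"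
  assumes A: "mult_char A" and "e \<noteq> 0" and c: "c = e\<^sup>2"
  shows "(\<Sum>x\<in>UNIV. qchar x * A (x / ((1 - x) * c))) = (\<Sum>u\<in>UNIV. A u * qchar (u * (1 + c * u)))"
proof -
  have "c \<noteq> 0" using assms by simp
  show ?thesis
  proof (rule sum.reindex_bij_witness_not_neutral
      [where S' = "{1}" and T' = "{u. 1 + c * u = 0}" and j = "\<lambda>x. x / ((1 - x) * c)"
         and i = "\<lambda>u. c * u / (1 + c * u)"])
    fix x :: 'a assume "x \<in> UNIV - {1}"
    then show "c * (x / ((1 - x) * c)) / (1 + c * (x / ((1 - x) * c))) = x"
      using \<open>c \<noteq> 0\<close> by (simp add: field_simps)
    show "x / ((1 - x) * c) \<in> UNIV - {u. 1 + c * u = 0}"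
      using \<open>c \<noteq> 0\<close> \<open>x \<in> UNIV - {1}\<close> by (auto simp: field_simps)
  next
    fix u :: 'a assume "u \<in> UNIV - {u. 1 + c * u = 0}"
    then have "1 + c * u \<noteq> 0" by simp
    have "1 - c * u / (1 + c * u) = 1 / (1 + c * u)"
      using \<open>1 + c * u \<noteq> 0\<close> by (simp add: field_simps)
    then show "c * u / (1 + c * u) / ((1 - c * u / (1 + c * u)) * c) = u"
      using \<open>c \<noteq> 0\<close> \<open>1 + c * u \<noteq> 0\<close> by simp
    show "c * u / (1 + c * u) \<in> UNIV - {1}"
      using \<open>1 + c * u \<noteq> 0\<close> by (auto simp: field_simps)
  next
    fix x :: 'a
    show "A (x / ((1 - x) * c)) * qchar (x / ((1 - x) * c) * (1 + c * (x / ((1 - x) * c))))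
        = qchar x * A (x / ((1 - x) * c))"
    proof (cases "x = 1")
      case False
      have "x / ((1 - x) * c) * (1 + c * (x / ((1 - x) * c))) = x * (e / (1 - x) / c)\<^sup>2"
        using False \<open>e \<noteq> 0\<close> c by (simp add: power2_eq_square field_simps)
      then show ?thesis using False \<open>e \<noteq> 0\<close> c by (simp add: qchar_mult_square)
    qed (simp add: mult_char_zero[OF A])
  qed (auto simp: mult_char_zero[OF A])
qed

lemma sum_qchar_fiber_jacobi:
  fixes c e u :: "'a::{field,finite}"
  assumes two: "(2::'a) \<noteq> 0" and "e \<noteq> 0" and c: "c = e\<^sup>2"
  shows "(\<Sum>x | 4 * x * (1 - x) / c = u. qchar (x * (1 - x))) = qchar u + qchar (u * (1 - c * u))"
proof -
  have "c \<noteq> 0" using assms by simp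
  have "(\<Sum>x | 4 * x * (1 - x) / c = u. qchar (x * (1 - x)))
      = (\<Sum>r | r\<^sup>2 = 1 - c * u. qchar ((1 + r) / 2 * (1 - (1 + r) / 2)))"
    unfolding fiber_jacobi_eq[OF two \<open>c \<noteq> 0\<close>] by (rule sum_affine_square_roots[OF two])
  also have "\<dots> = (\<Sum>r | r\<^sup>2 = 1 - c * u. qchar u)"
  proof (rule sum.cong[OF refl])
    fix r assume "r \<in> {r. r\<^sup>2 = 1 - c * u}"
    have "(1 + r) / 2 * (1 - (1 + r) / 2) = (1 - r\<^sup>2) / 4"
      using two by (simp add: power2_eq_square field_simps)
    also have "\<dots> = u * e\<^sup>2 / 4"
      using \<open>r \<in> {r. r\<^sup>2 = 1 - c * u}\<close> c by (simp add: mult.commute)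
    also have "\<dots> = u * (e / 2)\<^sup>2" by (simp add: power_divide)
    finally show "qchar ((1 + r) / 2 * (1 - (1 + r) / 2)) = qchar u"
      using \<open>e \<noteq> 0\<close> two by (simp add: qchar_mult_square)
  qed
  also have "\<dots> = qchar u * (1 + qchar (1 - c * u))"
    by (simp add: card_square_roots[OF two])
  finally show ?thesis by (simp add: qchar_mult[OF two] distrib_left)
qed

context
  fixes A :: "'a::{field,finite} \<Rightarrow> complex"
  assumes two: "(2::'a) \<noteq> 0" and A: "mult_char A" and A_order: "char_order A > 2"
begin

lemma A_square_nontrivial: obtains g where "g \<noteq> 0" "A g ^ 2 \<noteq> 1"
proof -
  have "\<not> (\<forall>x. x \<noteq> 0 \<longrightarrow> A x ^ 2 = 1)"
  proof
    assume "\<forall>x. x \<noteq> 0 \<longrightarrow> A x ^ 2 = 1"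
    then have "char_order A \<le> 2" unfolding char_order_def by (intro Least_le) simp
    with A_order show False by simp
  qed
  then show thesis using that by blast
qed

lemma A_qchar_nontrivial: obtains g where "g \<noteq> 0" "A g * qchar g \<noteq> 1" "(A g * qchar g)\<^sup>2 \<noteq> 1"
proof -
  obtain g where g: "g \<noteq> 0" "A g ^ 2 \<noteq> 1" by (rule A_square_nontrivial)
  then have "(A g * qchar g)\<^sup>2 \<noteq> 1" by (simp add: power_mult_distrib qchar_power2)
  then show thesis using that g(1) by fastforce
qed

lemma sum_A_qchar_eq_0: "(\<Sum>u\<in>UNIV. A u * qchar u) = 0"
proof -
  obtain g where "g \<noteq> 0" "A g * qchar g \<noteq> 1" by (rule A_qchar_nontrivial)
  then show ?thesis
    using sum_mult_char_eq_0[OF mult_char_cmul[OF A mult_char_qchar[OF two]]] by (simp add: cmul_def)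
qed

lemma jacobi_A_qchar_cconj_neq_0: "jacobi (cmul A qchar) (cconj A) \<noteq> 0"
proof -
  obtain g where g: "g \<noteq> 0" "A g * qchar g \<noteq> 1" "(A g * qchar g)\<^sup>2 \<noteq> 1"
    by (rule A_qchar_nontrivial)
  then have "cnj (A g) \<noteq> 1" by (auto simp: power_mult_distrib qchar_power2)
  obtain n :: 'a where n: "n \<noteq> 0" "\<nexists>t. t\<^sup>2 = n" using exists_nonsquare[OF two] by blast
  have "A n * cnj (A n) = 1" by (rule mult_char_mult_cnj[OF A n(1)])
  then have "A n * qchar n * cnj (A n) \<noteq> 1" using n by (simp add: qchar_def mult.commute)
  then have "jacobi (cmul A qchar) (cconj A) * cnj (jacobi (cmul A qchar) (cconj A)) = of_nat CARD('a)"
    using g \<open>cnj (A g) \<noteq> 1\<close> n(1)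
    by (intro jacobi_norm_square[OF mult_char_cmul[OF A mult_char_qchar[OF two]] mult_char_cconj[OF A]])
       (auto simp: cmul_def cconj_def)
  then show ?thesis by auto
qed

lemma jacobi_A_qchar_A_qchar_neq_0: "jacobi (cmul A qchar) (cmul A qchar) \<noteq> 0"
proof -
  obtain g where g: "g \<noteq> 0" "A g * qchar g \<noteq> 1" "(A g * qchar g)\<^sup>2 \<noteq> 1"
    by (rule A_qchar_nontrivial)
  have "mult_char (cmul A qchar)" by (rule mult_char_cmul[OF A mult_char_qchar[OF two]])
  then have "jacobi (cmul A qchar) (cmul A qchar) * cnj (jacobi (cmul A qchar) (cmul A qchar)) = of_nat CARD('a)"
    using g by (intro jacobi_norm_square) (auto simp: cmul_def power2_eq_square)
  then show ?thesis by auto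
qed

lemma jacobi_A_qchar_cconj_twist:
  assumes c: "c = e\<^sup>2"
  shows "jacobi (cmul A qchar) (cconj A) * A (inverse c) = (\<Sum>u\<in>UNIV. A u * qchar (u * (1 + c * u)))"
proof (cases "e = 0")
  case True
  then show ?thesis using c sum_A_qchar_eq_0 by (simp add: mult_char_zero[OF A])
next
  case False
  have "jacobi (cmul A qchar) (cconj A) * A (inverse c) = (\<Sum>x\<in>UNIV. qchar x * A (x / ((1 - x) * c)))"
    unfolding jacobi_def sum_distrib_right
    by (intro sum.cong refl)
       (simp add: cmul_def cconj_def cnj_mult_char[OF A] divide_inverse mult_ac flip: mult_char_mult[OF A])
  also have "\<dots> = (\<Sum>u\<in>UNIV. A u * qchar (u * (1 + c * u)))"
    by (rule sum_qchar_moebius_twist[OF A False c])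
  finally show ?thesis .
qed

lemma jacobi_A_qchar_A_qchar_twist:
  assumes c: "c = e\<^sup>2"
  shows "jacobi (cmul A qchar) (cmul A qchar) * A (4 / c) = (\<Sum>u\<in>UNIV. A u * qchar (u * (1 - c * u)))"
proof (cases "e = 0")
  case True
  then show ?thesis using c sum_A_qchar_eq_0 by (simp add: mult_char_zero[OF A])
next
  case False
  have "jacobi (cmul A qchar) (cmul A qchar) * A (4 / c)
      = (\<Sum>x\<in>UNIV. qchar (x * (1 - x)) * A (4 * x * (1 - x) / c))"
    unfolding jacobi_def sum_distrib_right
    by (intro sum.cong refl)
       (simp add: cmul_def qchar_mult[OF two] divide_inverse mult_ac flip: mult_char_mult[OF A])
  also have "\<dots> = (\<Sum>u\<in>UNIV. A u * (\<Sum>x | 4 * x * (1 - x) / c = u. qchar (x * (1 - x))))"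
    by (rule sum_comp_by_fibers)
  also have "\<dots> = (\<Sum>u\<in>UNIV. A u * qchar u + A u * qchar (u * (1 - c * u)))"
    by (simp add: sum_qchar_fiber_jacobi[OF two False c] distrib_left)
  also have "\<dots> = (\<Sum>u\<in>UNIV. A u * qchar (u * (1 - c * u)))"
    using sum_A_qchar_eq_0 by (simp add: sum.distrib)
  finally show ?thesis .
qed

lemma P21_phi_eq:
  "P21 A (cmul A qchar) qchar z = (\<Sum>u\<in>UNIV. A u * (\<Sum>y | y / ((1 - y) * (1 - z * y)) = u. qchar y))"
proof -
  have "P21 A (cmul A qchar) qchar z = (\<Sum>y\<in>UNIV. qchar y * A (y / ((1 - y) * (1 - z * y))))"
    unfolding P21_def
  proof (intro sum.cong refl)
    fix y :: 'a
    show "cmul A qchar y * cmul (cconj (cmul A qchar)) qchar (1 - y) * cconj A (1 - z * y)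
        = qchar y * A (y / ((1 - y) * (1 - z * y)))"
    proof (cases "y = 1")
      case False
      then have "qchar (1 - y) * qchar (1 - y) = 1"
        using qchar_power2[of "1 - y"] by (simp add: power2_eq_square)
      then have "cmul A qchar y * cmul (cconj (cmul A qchar)) qchar (1 - y) * cconj A (1 - z * y)
          = qchar y * (A y * A (inverse (1 - y)) * A (inverse (1 - z * y)))"
        by (simp add: cmul_def cconj_def cnj_mult_char[OF A] mult_ac)
      then show ?thesis by (simp add: divide_inverse mult_ac flip: mult_char_mult[OF A])
    qed (simp add: cmul_def cconj_def mult_char_zero[OF A])
  qed
  also have "\<dots> = (\<Sum>u\<in>UNIV. A u * (\<Sum>y | y / ((1 - y) * (1 - z * y)) = u. qchar y))"
    by (rule sum_comp_by_fibers)
  finally show ?thesis .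
qed

lemma P21_A_square_eq:
  "P21 A (cmul A qchar) (cmul A A) z
    = (\<Sum>u\<in>UNIV. A u * (\<Sum>y | y * (1 - y) / (1 - z * y) = u. qchar (y * (1 - y))))"
proof -
  have A_cancel: "cnj (A w) * A w * A w = A w" for w
    by (cases "w = 0") (simp_all add: mult_char_zero[OF A] cnj_mult_char[OF A] flip: mult_char_mult[OF A])
  have "P21 A (cmul A qchar) (cmul A A) z = (\<Sum>y\<in>UNIV. qchar (y * (1 - y)) * A (y * (1 - y) / (1 - z * y)))"
    unfolding P21_def
  proof (intro sum.cong refl)
    fix y :: 'a
    have "cmul A qchar y * cmul (cconj (cmul A qchar)) (cmul A A) (1 - y) * cconj A (1 - z * y)
      = qchar y * qchar (1 - y) * (A y * (cnj (A (1 - y)) * A (1 - y) * A (1 - y)) * A (inverse (1 - z * y)))"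
      by (simp add: cmul_def cconj_def cnj_mult_char[OF A] mult_ac)
    then show "cmul A qchar y * cmul (cconj (cmul A qchar)) (cmul A A) (1 - y) * cconj A (1 - z * y)
      = qchar (y * (1 - y)) * A (y * (1 - y) / (1 - z * y))"
      unfolding A_cancel by (simp add: qchar_mult[OF two] divide_inverse mult_ac flip: mult_char_mult[OF A])
  qed
  also have "\<dots> = (\<Sum>u\<in>UNIV. A u * (\<Sum>y | y * (1 - y) / (1 - z * y) = u. qchar (y * (1 - y))))"
    by (rule sum_comp_by_fibers)
  finally show ?thesis .
qed

lemma P21_phi_square:
  assumes "s \<noteq> 0"
  shows "P21 A (cmul A qchar) qchar (s\<^sup>2)
    = jacobi (cmul A qchar) (cconj A) * (A (inverse ((1 - s)\<^sup>2)) + A (inverse ((1 + s)\<^sup>2)))"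
proof -
  have "P21 A (cmul A qchar) qchar (s\<^sup>2)
      = (\<Sum>u\<in>UNIV. A u * (qchar (u * (1 + (1 - s)\<^sup>2 * u)) + qchar (u * (1 + (1 + s)\<^sup>2 * u))))"
    unfolding P21_phi_eq
    by (rule sum_mult_char_cong[OF A]) (rule sum_qchar_fiber_phi_square[OF two _ assms])
  then show ?thesis
    by (simp add: distrib_left sum.distrib jacobi_A_qchar_cconj_twist[OF refl])
qed

lemma P21_phi_nonsquare:
  assumes "z \<noteq> 0" "\<nexists>s. s\<^sup>2 = z"
  shows "P21 A (cmul A qchar) qchar z = 0"
proof -
  have "P21 A (cmul A qchar) qchar z = (\<Sum>u\<in>UNIV. A u * 0)"
    unfolding P21_phi_eq
    by (rule sum_mult_char_cong[OF A]) (rule sum_qchar_fiber_phi_nonsquare[OF two _ assms])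
  then show ?thesis by simp
qed

lemma P21_A_square_square:
  assumes "s \<noteq> 0"
  shows "P21 A (cmul A qchar) (cmul A A) (1 - s\<^sup>2)
    = jacobi (cmul A qchar) (cmul A qchar) * (A (4 / (1 + s)\<^sup>2) + A (4 / (1 - s)\<^sup>2))"
proof -
  have "P21 A (cmul A qchar) (cmul A A) (1 - s\<^sup>2)
      = (\<Sum>u\<in>UNIV. A u * (qchar (u * (1 - (1 + s)\<^sup>2 * u)) + qchar (u * (1 - (1 - s)\<^sup>2 * u))))"
    unfolding P21_A_square_eq
    by (rule sum_mult_char_cong[OF A]) (rule sum_qchar_fiber_A_square_square[OF two _ assms])
  then show ?thesis
    by (simp add: distrib_left sum.distrib jacobi_A_qchar_A_qchar_twist[OF refl])
qed

lemma P21_A_square_one: "P21 A (cmul A qchar) (cmul A A) 1 = jacobi (cmul A qchar) (cmul A qchar) * A 4"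
proof -
  have "P21 A (cmul A qchar) (cmul A A) 1 = (\<Sum>u\<in>UNIV. A u * qchar (u * (1 - u)))"
    unfolding P21_A_square_eq mult_1
    by (rule sum_mult_char_cong[OF A]) (rule sum_qchar_fiber_A_square_one)
  then show ?thesis using jacobi_A_qchar_A_qchar_twist[of 1 1] by simp
qed

lemma P21_A_square_nonsquare:
  assumes "\<nexists>s. s\<^sup>2 = 1 - z"
  shows "P21 A (cmul A qchar) (cmul A A) z = 0"
proof -
  have "P21 A (cmul A qchar) (cmul A A) z = (\<Sum>u\<in>UNIV. A u * 0)"
    unfolding P21_A_square_eq
    by (rule sum_mult_char_cong[OF A]) (rule sum_qchar_fiber_A_square_nonsquare[OF two _ assms])
  then show ?thesis by simp
qed

lemma qchar_div_A_qchar: "cmul qchar (cconj (cmul A qchar)) = cconj A"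
proof
  fix x :: 'a
  show "cmul qchar (cconj (cmul A qchar)) x = cconj A x"
  proof (cases "x = 0")
    case False
    then show ?thesis using qchar_power2[OF False] by (simp add: cmul_def cconj_def power2_eq_square)
  qed (simp add: cmul_def cconj_def mult_char_zero[OF A])
qed

lemma A_square_div_A_qchar: "cmul (cmul A A) (cconj (cmul A qchar)) = cmul A qchar"
proof
  fix x :: 'a
  show "cmul (cmul A A) (cconj (cmul A qchar)) x = cmul A qchar x"
  proof (cases "x = 0")
    case False
    then show ?thesis using mult_char_mult_cnj[OF A False] by (simp add: cmul_def cconj_def)
  qed (simp add: cmul_def cconj_def mult_char_zero[OF A])
qed

lemma cmul_cconj_cconj: "cmul (cconj A) (cconj A) t = A (inverse (t\<^sup>2))"
  by (simp add: cmul_def cconj_def cnj_mult_char[OF A] power2_eq_square flip: mult_char_mult[OF A])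

lemma F21_phi_square:
  assumes "z \<noteq> 0" "s\<^sup>2 = z"
  shows "F21 A (cmul A qchar) qchar z
    = (1 + qchar z) / 2 * (cmul (cconj A) (cconj A) (1 + s) + cmul (cconj A) (cconj A) (1 - s))"
proof -
  have "s \<noteq> 0" using assms by auto
  then have "qchar z = 1" using assms qchar_square by blast
  have "F21 A (cmul A qchar) qchar z = A (inverse ((1 - s)\<^sup>2)) + A (inverse ((1 + s)\<^sup>2))"
    using jacobi_A_qchar_cconj_neq_0
    unfolding F21_def qchar_div_A_qchar assms(2)[symmetric] P21_phi_square[OF \<open>s \<noteq> 0\<close>] by simp
  then show ?thesis using \<open>qchar z = 1\<close> by (simp add: cmul_cconj_cconj add.commute)
qed

lemma F21_phi_nonsquare: "z \<noteq> 0 \<Longrightarrow> \<nexists>s. s\<^sup>2 = z \<Longrightarrow> F21 A (cmul A qchar) qchar z = 0"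
  by (simp add: F21_def P21_phi_nonsquare)

lemma F21_A_square_square:
  assumes "s\<^sup>2 = 1 - z"
  shows "F21 A (cmul A qchar) (cmul A A) z = (1 + qchar (1 - z)) / 2
    * (cmul (cconj A) (cconj A) ((1 + s) / 2) + cmul (cconj A) (cconj A) ((1 - s) / 2))"
proof (cases "s = 0")
  case True
  then have "z = 1" using assms by simp
  then show ?thesis
    using jacobi_A_qchar_A_qchar_neq_0 True
    by (simp add: F21_def A_square_div_A_qchar P21_A_square_one cmul_cconj_cconj power_divide)
next
  case False
  then have "qchar (1 - z) = 1" using assms qchar_square by metis
  have "z = 1 - s\<^sup>2" using assms by simp
  then show ?thesis
    using jacobi_A_qchar_A_qchar_neq_0 \<open>qchar (1 - z) = 1\<close>
    by (simp add: F21_def A_square_div_A_qchar P21_A_square_square[OF False] cmul_cconj_cconj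
        power_divide inverse_divide)
qed

lemma F21_A_square_nonsquare: "\<nexists>s. s\<^sup>2 = 1 - z \<Longrightarrow> F21 A (cmul A qchar) (cmul A A) z = 0"
  by (simp add: F21_def P21_A_square_nonsquare)

end

theorem mainTheorem5:
  fixes A :: "'a::{field,finite} \<Rightarrow> complex" and z :: 'a
  assumes q_odd: "odd CARD('a)"
    and z_nz: "z \<noteq> 0"
    and A_char: "mult_char A"
    and A_ord: "char_order A > 2"
  shows "(\<forall>s. s ^ 2 = z \<longrightarrow>
            F21 A (cmul A qchar) qchar z =
              (1 + qchar z) / 2 * ((cmul (cconj A) (cconj A)) (1 + s) + (cmul (cconj A) (cconj A)) (1 - s)))
       \<and> ((\<nexists>s. s ^ 2 = z) \<longrightarrow> F21 A (cmul A qchar) qchar z = 0)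
       \<and> (\<forall>s. s ^ 2 = 1 - z \<longrightarrow>
            F21 A (cmul A qchar) (cmul A A) z =
              (1 + qchar (1 - z)) / 2 * ((cmul (cconj A) (cconj A)) ((1 + s) / 2)
                                       + (cmul (cconj A) (cconj A)) ((1 - s) / 2)))
       \<and> ((\<nexists>s. s ^ 2 = 1 - z) \<longrightarrow> F21 A (cmul A qchar) (cmul A A) z = 0)"
proof -
  note two = two_neq_zero_if_odd_card[OF q_odd]
  show ?thesis
    using F21_phi_square[OF two A_char A_ord z_nz] F21_phi_nonsquare[OF two A_char A_ord z_nz]
      F21_A_square_square[OF two A_char A_ord] F21_A_square_nonsquare[OF two A_char A_ord]
    by blast
qed

end
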